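(* Let $L=8$ and let $B=2^s\ge 8$. Let $\alpha_0,\dots,\alpha_{B-1}$ be nonzero real LLRs of one list path at a rate-1 constituent block, indexed so that $|\alpha_0|<|\alpha_1|<\cdots<|\alpha_{B-1}|$, and let $\beta=(\beta_0,\dots,\beta_{B-1})\in\{0,1\}^B$ with $\beta_j=\frac{1-\mathrm{sgn}(\alpha_j)}{2}$. For a candidate sub-path $\hat\beta\in\{0,1\}^B$ define its incremental path metric $\Delta(\hat\beta)=\sum_{j=0}^{B-1}|\hat\beta_j-\beta_j|\,|\alpha_j|$. Let $\mathcal C\subseteq\{0,1\}^B$ be the following set of 13 vectors: $\beta$; $\beta\oplus e_p$ for $p=0,1,\dots,6$; $\beta\oplus e_0\oplus e_1$; $\beta\oplus e_0\oplus e_2$; $\beta\oplus e_1\oplus e_2$; $\beta\oplus e_0\oplus e_3$; $\beta\oplus e_0\oplus e_1\oplus e_2$. Then the $L=8$ maximum-likelihood sub-paths of this path (the 8 vectors of $\{0,1\}^B$ with the smallest incremental path metrics $\Delta$) fall into $\mathcal C$; that is, there is a set $S\subseteq\mathcal C$ with $|S|=8$ such that $\Delta(v)\le\Delta(w)$ for all $v\in S$ and all $w\in\{0,1\}^B\setminus S$. Consequently, in one-time path extension of all 8 list paths followed by pruning to the 8 paths of smallest path metric, restricting each path's extensions to these 13 error patterns incurs no loss.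
   Context: Setting: successive-cancellation list (SCL) decoding of a polar code with list size $L$. At a constituent block of length $B$ (a rate-1 node, i.e., all $B$ positions carry information, so every vector in $\{0,1\}^B$ is a valid codeword of the block), each list path $l$ has a path metric $\mathrm{PM}^l$ and soft inputs $\alpha_j$. A sub-path extending path $l$ is a choice of block output $\hat\beta\in\{0,1\}^B$; its new path metric is $\mathrm{PM}^l+\Delta(\hat\beta)$. After extension, the $L$ extended paths (over all parent paths) with the smallest path metrics survive. $e_p\in\{0,1\}^B$ denotes the vector with a $1$ in position $p$ (positions indexed $0,\dots,B-1$ in the sorted order above) and $0$ elsewhere; $\oplus$ is componentwise XOR. *)

theory Defs
  imports Complex_Main
begin

definition binvecs :: "nat \<Rightarrow> (nat \<Rightarrow> real) set" where
  "binvecs B = {v. (\<forall>j<B. v j \<in> {0, 1}) \<and> (\<forall>j\<ge>B. v j = 0)}"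

definition xorv :: "(nat \<Rightarrow> real) \<Rightarrow> (nat \<Rightarrow> real) \<Rightarrow> nat \<Rightarrow> real" where
  "xorv v w = (\<lambda>j. \<bar>v j - w j\<bar>)"

definition unitv :: "nat \<Rightarrow> nat \<Rightarrow> real" where
  "unitv p = (\<lambda>j. if j = p then 1 else 0)"

definition hard_dec :: "nat \<Rightarrow> (nat \<Rightarrow> real) \<Rightarrow> nat \<Rightarrow> real" where
  "hard_dec B alpha = (\<lambda>j. if j < B then (1 - sgn (alpha j)) / 2 else 0)"

definition delta :: "nat \<Rightarrow> (nat \<Rightarrow> real) \<Rightarrow> (nat \<Rightarrow> real) \<Rightarrow> real" where
  "delta B alpha bh = (\<Sum>j<B. \<bar>bh j - hard_dec B alpha j\<bar> * \<bar>alpha j\<bar>)"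

definition cand_set :: "nat \<Rightarrow> (nat \<Rightarrow> real) \<Rightarrow> (nat \<Rightarrow> real) set" where
  "cand_set B alpha =
    (let \<beta> = hard_dec B alpha in
     {\<beta>} \<union> {xorv \<beta> (unitv p) | p. p \<le> 6} \<union>
     {xorv (xorv \<beta> (unitv 0)) (unitv 1),
      xorv (xorv \<beta> (unitv 0)) (unitv 2),
      xorv (xorv \<beta> (unitv 1)) (unitv 2),
      xorv (xorv \<beta> (unitv 0)) (unitv 3),
      xorv (xorv (xorv \<beta> (unitv 0)) (unitv 1)) (unitv 2)})"

end

theory Submission
  imports Defs
begin

text \<open>Every binary vector is the hard decision \<open>\<beta>\<close> with the positions of some set \<open>F\<close>
  flipped, and its metric \<open>\<Delta>\<close> is then \<open>\<Sum>j\<in>F. \<bar>\<alpha>\<^sub>j\<bar>\<close>. Since the reliabilities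
  \<open>\<bar>\<alpha>\<^sub>j\<bar>\<close> increase with \<open>j\<close>, a flip set outside the 13 candidate patterns weighs at least as
  much as each of eight distinct candidate patterns: if it contains an index \<open>m \<ge> 7\<close>, compare with
  \<open>{}, {0}, \<dots>, {6}\<close>; if it contains an index \<open>m \<ge> 4\<close> and some other \<open>i\<close>, with
  \<open>{}, {0}, \<dots>, {4}, {0,1}, {0,2}\<close>; otherwise it contains \<open>3\<close> and one of \<open>1, 2\<close>, and we compare
  with all subsets of \<open>{0,1,2}\<close> of size at most two and \<open>{3}\<close>. So no vector outside the
  candidate set can displace any of the eight best candidates.\<close>

lemma exists_k_smallest:
  fixes f :: "'a \<Rightarrow> 'b::linorder"
  assumes "finite C" "k \<le> card C"
  shows "\<exists>S\<subseteq>C. card S = k \<and> (\<forall>v\<in>S. \<forall>w\<in>C - S. f v \<le> f w)"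
  using assms(2)
proof (induction k)
  case 0
  then show ?case by auto
next
  case (Suc k)
  then obtain S where S: "S \<subseteq> C" "card S = k" "\<forall>v\<in>S. \<forall>w\<in>C - S. f v \<le> f w"
    by auto
  have fin: "finite S"
    using S(1) assms(1) finite_subset by blast
  have "C - S \<noteq> {}"
  proof
    assume "C - S = {}"
    then have "card C \<le> card S"
      using card_mono[OF fin] by blast
    with S(2) Suc.prems show False by simp
  qed
  then obtain u where "is_arg_min f (\<lambda>x. x \<in> C - S) u"
    using ex_is_arg_min_if_finite[of "C - S" f] assms(1) by blast
  then have u: "u \<in> C - S" "\<forall>w\<in>C - S. f u \<le> f w"
    by (auto simp: is_arg_min_linorder)
  show ?case
  proof (intro exI[of _ "insert u S"] conjI)
    show "insert u S \<subseteq> C"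
      using S(1) u(1) by blast
    show "card (insert u S) = Suc k"
      using fin u(1) S(2) by simp
    show "\<forall>v\<in>insert u S. \<forall>w\<in>C - insert u S. f v \<le> f w"
      using S(3) u by blast
  qed
qed

lemma k_smallest_le_dominated:
  fixes f :: "'a \<Rightarrow> 'b::linorder"
  assumes S: "finite S" "S \<subseteq> C" "\<forall>v\<in>S. \<forall>u\<in>C - S. f v \<le> f u"
    and T: "T \<subseteq> C" "card S \<le> card T" "\<forall>t\<in>T. f t \<le> f w"
    and v: "v \<in> S"
  shows "f v \<le> f w"
proof (rule ccontr)
  assume "\<not> f v \<le> f w"
  have "t \<in> S - {v}" if "t \<in> T" for t
  proof -
    have "f t < f v"
      using T(3) that \<open>\<not> f v \<le> f w\<close> by force
    moreover from this have "t \<in> S"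
      using S(3) T(1) that v by force
    ultimately show ?thesis by auto
  qed
  then have "card T \<le> card (S - {v})"
    using S(1) by (intro card_mono) auto
  also have "\<dots> < card S"
    using card_Diff1_less[OF S(1) v] .
  finally show False
    using T(2) by simp
qed

lemma exists_k_smallest_of_dominating:
  fixes f :: "'a \<Rightarrow> 'b::linorder"
  assumes C: "finite C" "k \<le> card C"
    and dom: "\<And>w. w \<in> D - C \<Longrightarrow> \<exists>T\<subseteq>C. card T = k \<and> (\<forall>t\<in>T. f t \<le> f w)"
  shows "\<exists>S\<subseteq>C. card S = k \<and> (\<forall>v\<in>S. \<forall>w\<in>D - S. f v \<le> f w)"
proof -
  obtain S where S: "S \<subseteq> C" "card S = k" "\<forall>v\<in>S. \<forall>w\<in>C - S. f v \<le> f w"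
    using exists_k_smallest[OF C] by blast
  have "f v \<le> f w" if v: "v \<in> S" and w: "w \<in> D - S" for v w
  proof (cases "w \<in> C")
    case True
    with S(3) v w show ?thesis by blast
  next
    case False
    with dom w obtain T where T: "T \<subseteq> C" "card T = k" "\<forall>t\<in>T. f t \<le> f w"
      by blast
    show ?thesis
    proof (rule k_smallest_le_dominated[OF _ S(1,3) T(1) _ T(3) v])
      show "finite S" using finite_subset[OF S(1) C(1)] .
      show "card S \<le> card T" using S(2) T(2) by simp
    qed
  qed
  with S show ?thesis by blast
qed

definition error_patterns :: "nat set set" where
  "error_patterns = {{}} \<union> {{p} | p. p \<le> 6} \<union> {{0,1}, {0,2}, {1,2}, {0,3}, {0,1,2}}"

lemma singleton_patterns: "{{}} \<union> (\<lambda>p. {p}) ` {..6} \<subseteq> error_patterns"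
  unfolding error_patterns_def by auto

lemma card_singleton_patterns: "card ({{}} \<union> (\<lambda>p. {p::nat}) ` {..6}) = 8"
proof -
  have "card ((\<lambda>p. {p::nat}) ` {..6}) = 7" by (simp add: card_image)
  moreover have "{} \<notin> (\<lambda>p. {p::nat}) ` {..6}" by blast
  ultimately show ?thesis by simp
qed

lemma error_patterns_finite: "finite error_patterns"
  unfolding error_patterns_def by simp

lemma card_error_patterns_ge: "8 \<le> card error_patterns"
  using card_mono[OF error_patterns_finite singleton_patterns] card_singleton_patterns by simp

lemma error_patterns_subset_Pow: "6 < B \<Longrightarrow> error_patterns \<subseteq> Pow {..<B}"
  unfolding error_patterns_def by auto

lemma Pow_012_subset_error_patterns: "Pow {0,1,2} \<subseteq> error_patterns"
  unfolding error_patterns_def Pow_insert by (auto simp: insert_commute)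

lemma not_error_pattern_cases:
  assumes "F \<notin> error_patterns"
  shows "(\<exists>m\<in>F. 7 \<le> m) \<or> (\<exists>m\<in>F. \<exists>i\<in>F. 4 \<le> m \<and> i \<noteq> m) \<or> (3 \<in> F \<and> (\<exists>i\<in>{1,2}. i \<in> F))"
proof (rule ccontr)
  assume "\<not> ?thesis"
  then have small: "\<forall>m\<in>F. m \<le> 6" and single: "\<forall>m\<in>F. \<forall>i\<in>F. 4 \<le> m \<longrightarrow> i = m"
    and no3: "3 \<in> F \<longrightarrow> 1 \<notin> F \<and> 2 \<notin> F" by auto
  show False
  proof (cases "\<exists>m\<in>F. 4 \<le> m")
    case True
    then obtain m where "m \<in> F" "4 \<le> m" by blast
    with small single have "F = {m}" "m \<le> 6" by auto
    with assms show False unfolding error_patterns_def by auto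
  next
    case False
    then have "F \<subseteq> {0,1,2,3}" by force
    with no3 consider "F \<in> Pow {0,1,2}" | "F = {3}" | "F = {0,3}" by auto
    moreover have "{3} \<in> error_patterns" "{0,3} \<in> error_patterns"
      by (simp_all add: error_patterns_def)
    ultimately have "F \<in> error_patterns"
      using Pow_012_subset_error_patterns by cases blast+
    with assms show False ..
  qed
qed

lemma error_patterns_dominate:
  fixes a :: "nat \<Rightarrow> real"
  assumes mono: "mono_on {..<B} a" and nonneg: "\<And>j. 0 \<le> a j"
    and F: "F \<subseteq> {..<B}" "F \<notin> error_patterns"
  shows "\<exists>T\<subseteq>error_patterns. card T = 8 \<and> (\<forall>X\<in>T. sum a X \<le> sum a F)"
proof -
  have below: "a i \<le> a j" if "i \<le> j" "j \<in> F" for i j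
    using mono_onD[OF mono] that F(1) by auto
  have dominated_via: ?thesis
    if T: "T \<subseteq> error_patterns" "card T = 8" and G: "G \<subseteq> F" "\<forall>X\<in>T. sum a X \<le> sum a G"
    for T G
  proof -
    have "sum a G \<le> sum a F"
      using sum_mono2[OF finite_subset[OF F(1)] G(1)] nonneg by auto
    with T G(2) show ?thesis by (meson order_trans)
  qed
  from not_error_pattern_cases[OF F(2)] show ?thesis
  proof (elim disjE conjE bexE)
    fix m assume m: "m \<in> F" "7 \<le> m"
    show ?thesis
    proof (rule dominated_via[of "{{}} \<union> (\<lambda>p. {p}) ` {..6}" "{m}"])
      show "\<forall>X\<in>{{}} \<union> (\<lambda>p. {p}) ` {..6}. sum a X \<le> sum a {m}"
        using below[OF _ m(1)] m(2) nonneg by auto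
    qed (use m singleton_patterns card_singleton_patterns in auto)
  next
    fix m i assume mi: "m \<in> F" "i \<in> F" "4 \<le> m" "i \<noteq> m"
    show ?thesis
    proof (rule dominated_via[of "{{}, {0}, {1}, {2}, {3}, {4}, {0,1}, {0,2}}" "{i,m}"])
      show "\<forall>X\<in>{{}, {0}, {1}, {2}, {3}, {4}, {0,1}, {0,2}}. sum a X \<le> sum a {i,m}"
        using below[of 0 i] below[of 1 m] below[of 2 m] below[of 3 m] below[of 4 m] mi
          nonneg[of i] nonneg[of m]
        by auto
    qed (use mi in \<open>auto simp: error_patterns_def doubleton_eq_iff\<close>)
  next
    fix i assume i: "3 \<in> F" "i \<in> {1,2}" "i \<in> F"
    show ?thesis
    proof (rule dominated_via[of "{{}, {0}, {1}, {2}, {3}, {0,1}, {0,2}, {1,2}}" "{i,3}"])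
      show "\<forall>X\<in>{{}, {0}, {1}, {2}, {3}, {0,1}, {0,2}, {1,2}}. sum a X \<le> sum a {i,3}"
        using below[of 0 i] below[of 1 i] below[of 1 3] below[of 2 3] i nonneg[of i] nonneg[of 3]
        by auto
    qed (use i in \<open>auto simp: error_patterns_def doubleton_eq_iff\<close>)
  qed
qed

definition flipv :: "(nat \<Rightarrow> real) \<Rightarrow> nat set \<Rightarrow> nat \<Rightarrow> real" where
  "flipv b X = (\<lambda>j. if j \<in> X then 1 - b j else b j)"

lemma flipv_empty [simp]: "flipv b {} = b"
  unfolding flipv_def by simp

lemma xorv_flipv_unitv:
  assumes "\<And>j. b j \<in> {0,1}" "p \<notin> X"
  shows "xorv (flipv b X) (unitv p) = flipv b (X \<union> {p})"
proof
  fix j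
  show "xorv (flipv b X) (unitv p) j = flipv b (X \<union> {p}) j"
    using assms(1)[of j] assms(2) unfolding xorv_def flipv_def unitv_def by auto
qed

lemma inj_flipv:
  assumes "\<And>j. b j \<in> {0,1}"
  shows "inj (flipv b)"
proof (rule injI)
  fix X Y assume eq: "flipv b X = flipv b Y"
  show "X = Y"
  proof (rule set_eqI)
    fix j
    have "flipv b X j = flipv b Y j" using eq by simp
    with assms[of j] show "j \<in> X \<longleftrightarrow> j \<in> Y"
      unfolding flipv_def by (auto split: if_splits)
  qed
qed

lemma binvecs_binary: "v \<in> binvecs B \<Longrightarrow> v j \<in> {0,1}"
  unfolding binvecs_def by (cases "j < B") auto

lemma binvecs_subset_flipv_image:
  assumes "b \<in> binvecs B"
  shows "binvecs B \<subseteq> flipv b ` Pow {..<B}"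
proof
  fix w assume w: "w \<in> binvecs B"
  have "w = flipv b {j. j < B \<and> w j \<noteq> b j}"
  proof
    fix j
    show "w j = flipv b {j. j < B \<and> w j \<noteq> b j} j"
    proof (cases "j < B")
      case True
      then show ?thesis
        using binvecs_binary[OF w, of j] binvecs_binary[OF assms, of j] unfolding flipv_def by auto
    next
      case False
      then show ?thesis
        using w assms unfolding binvecs_def flipv_def by simp
    qed
  qed
  then show "w \<in> flipv b ` Pow {..<B}" by blast
qed

lemma hard_dec_in_binvecs:
  assumes "\<And>j. j < B \<Longrightarrow> alpha j \<noteq> 0"
  shows "hard_dec B alpha \<in> binvecs B"
  using assms unfolding binvecs_def hard_dec_def by (auto simp: sgn_if)

lemma delta_flipv_hard_dec:
  assumes "hard_dec B alpha \<in> binvecs B" "X \<subseteq> {..<B}"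
  shows "delta B alpha (flipv (hard_dec B alpha) X) = (\<Sum>j\<in>X. \<bar>alpha j\<bar>)"
proof -
  have "delta B alpha (flipv (hard_dec B alpha) X) = (\<Sum>j<B. if j \<in> X then \<bar>alpha j\<bar> else 0)"
    unfolding delta_def
  proof (rule sum.cong)
    fix j
    show "\<bar>flipv (hard_dec B alpha) X j - hard_dec B alpha j\<bar> * \<bar>alpha j\<bar> =
        (if j \<in> X then \<bar>alpha j\<bar> else 0)"
      using binvecs_binary[OF assms(1), of j] unfolding flipv_def by auto
  qed simp
  also have "\<dots> = (\<Sum>j\<in>X. \<bar>alpha j\<bar>)"
    using assms(2) by (simp add: sum.inter_restrict[symmetric] Int_absorb1)
  finally show ?thesis .
qed

lemma cand_set_eq_flipv_image:
  assumes "hard_dec B alpha \<in> binvecs B"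
  shows "cand_set B alpha = flipv (hard_dec B alpha) ` error_patterns"
proof -
  let ?b = "hard_dec B alpha"
  note flip = xorv_flipv_unitv[OF binvecs_binary[OF assms]]
  have single: "xorv ?b (unitv p) = flipv ?b {p}" for p
    using flip[of p "{}"] by simp
  have "{xorv ?b (unitv p) | p. p \<le> 6} = flipv ?b ` {{p} | p. p \<le> 6}"
    unfolding single by blast
  moreover have "{1,0} = {0,1::nat}" "{2,0} = {0,2::nat}" "{2,1} = {1,2::nat}" "{3,0} = {0,3::nat}"
    "{2,1,0} = {0,1,2::nat}"
    by auto
  ultimately show ?thesis
    unfolding cand_set_def error_patterns_def Let_def single image_Un
    by (simp add: flip)
qed

lemma non_candidate_dominated:
  assumes "6 < B"
    and nonzero: "\<And>j. j < B \<Longrightarrow> alpha j \<noteq> 0"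
    and increasing: "\<And>i j. i < j \<Longrightarrow> j < B \<Longrightarrow> \<bar>alpha i\<bar> < \<bar>alpha j\<bar>"
    and w: "w \<in> binvecs B - cand_set B alpha"
  shows "\<exists>T\<subseteq>cand_set B alpha. card T = 8 \<and> (\<forall>t\<in>T. delta B alpha t \<le> delta B alpha w)"
proof -
  let ?b = "hard_dec B alpha"
  have b: "?b \<in> binvecs B"
    using hard_dec_in_binvecs nonzero by blast
  note cand = cand_set_eq_flipv_image[OF b]
  obtain F where F: "F \<subseteq> {..<B}" "w = flipv ?b F"
    using binvecs_subset_flipv_image[OF b] w by blast
  have "F \<notin> error_patterns"
  proof
    assume "F \<in> error_patterns"
    then have "w \<in> cand_set B alpha"
      using F(2) cand by simp
    with w show False by simp
  qed
  moreover have "mono_on {..<B} (\<lambda>j. \<bar>alpha j\<bar>)"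
  proof (rule mono_onI)
    fix i j :: nat assume "j \<in> {..<B}" "i \<le> j"
    then show "\<bar>alpha i\<bar> \<le> \<bar>alpha j\<bar>"
      using increasing[of i j] by (cases "i = j") auto
  qed
  ultimately obtain Ts where Ts: "Ts \<subseteq> error_patterns" "card Ts = 8"
      "\<forall>X\<in>Ts. (\<Sum>j\<in>X. \<bar>alpha j\<bar>) \<le> (\<Sum>j\<in>F. \<bar>alpha j\<bar>)"
    using error_patterns_dominate[OF _ _ F(1), of "\<lambda>j. \<bar>alpha j\<bar>"] by auto
  have "delta B alpha (flipv ?b X) \<le> delta B alpha w" if "X \<in> Ts" for X
  proof -
    have "X \<subseteq> {..<B}"
      using that Ts(1) error_patterns_subset_Pow[OF \<open>6 < B\<close>] by blast
    with that Ts(3) F show ?thesis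
      by (simp add: delta_flipv_hard_dec[OF b])
  qed
  moreover have "card (flipv ?b ` Ts) = 8"
    using Ts(2) card_image[OF inj_on_subset[OF inj_flipv[OF binvecs_binary[OF b]]]] by simp
  moreover have "flipv ?b ` Ts \<subseteq> cand_set B alpha"
    using Ts(1) cand by blast
  ultimately show ?thesis by blast
qed

theorem proposition1:
  fixes s :: nat and alpha :: "nat \<Rightarrow> real"
  assumes "(2::nat) ^ s \<ge> 8"
    and "\<And>j. j < 2 ^ s \<Longrightarrow> alpha j \<noteq> 0"
    and "\<And>i j. i < j \<Longrightarrow> j < 2 ^ s \<Longrightarrow> \<bar>alpha i\<bar> < \<bar>alpha j\<bar>"
  shows "\<exists>S. S \<subseteq> cand_set (2 ^ s) alpha \<and> card S = 8 \<and>
           (\<forall>v\<in>S. \<forall>w\<in>binvecs (2 ^ s) - S. delta (2 ^ s) alpha v \<le> delta (2 ^ s) alpha w)"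
proof -
  let ?B = "2 ^ s :: nat"
  have b: "hard_dec ?B alpha \<in> binvecs ?B"
    using hard_dec_in_binvecs assms(2) by blast
  note cand = cand_set_eq_flipv_image[OF b]
  have "finite (cand_set ?B alpha)"
    unfolding cand using error_patterns_finite by simp
  moreover have "8 \<le> card (cand_set ?B alpha)"
    unfolding cand using card_error_patterns_ge
    by (simp add: card_image inj_on_subset[OF inj_flipv[OF binvecs_binary[OF b]]])
  moreover have "6 < ?B"
    using assms(1) by linarith
  ultimately show ?thesis
    using exists_k_smallest_of_dominating[where D = "binvecs ?B" and f = "delta ?B alpha"]
      non_candidate_dominated[of ?B alpha] assms(2,3) by blast
qed

end
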